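(* Let $a\ge0$, $x^*=(a,a)^\top$, $y=(y_1,y_2)\sim\mathcal N(x^*,I_2)$, and $$\lambda(0,y)=\min_{x_1=x_2,\ x\ge0}\|x-y\|_2^2-\min_{x\ge0}\|x-y\|_2^2,$$ which equals $$(y_1^2+y_2^2)\mathbf 1\{y_1+y_2<0\}+\tfrac12(y_1-y_2)^2\mathbf 1\{y_1+y_2\ge0\}-y_1^2\mathbf 1\{y_1<0\}-y_2^2\mathbf 1\{y_2<0\}.$$ Then $\lambda(0,y)$ is stochastically dominated by a $\chi^2_1$ random variable. Consequently the example $K=I_2$, $h=(1,-1)^\top$, $x^*=(a,a)^\top$ is not a counterexample to the Rust–Burrus conjecture.
   Context: A real random variable $X$ stochastically dominates $Y$ if $\mathbb P(X>z)\ge\mathbb P(Y>z)$ for all $z\in\mathbb R$. Vector inequalities are componentwise. The Rust–Burrus conjecture asserts that for $y\sim\mathcal N(Kx^*,I_m)$ with $x^*\ge0$, the interval $[\min h^\top x,\max h^\top x]$ over $\{x\ge0:\|y-Kx\|_2^2\le z^2_{\alpha/2}+\min_{x'\ge0}\|y-Kx'\|_2^2\}$ covers $h^\top x^*$ with probability at least $1-\alpha$ for all $\alpha\in(0,1)$, where $\mathbb P(N>z_{\alpha/2})=\alpha/2$ for $N\sim\mathcal N(0,1)$. *)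

theory Defs
  imports "HOL-Probability.Probability"
begin

definition sqdist2 :: "real \<times> real \<Rightarrow> real \<times> real \<Rightarrow> real" where
  "sqdist2 u v = (fst u - fst v)\<^sup>2 + (snd u - snd v)\<^sup>2"

definition nonneg2 :: "real \<times> real \<Rightarrow> bool" where
  "nonneg2 x \<longleftrightarrow> fst x \<ge> 0 \<and> snd x \<ge> 0"

definition lam0 :: "real \<times> real \<Rightarrow> real" where
  "lam0 y = (INF x\<in>{x. nonneg2 x \<and> fst x = snd x}. sqdist2 x y)
            - (INF x\<in>{x. nonneg2 x}. sqdist2 x y)"

definition gauss2 :: "real \<Rightarrow> (real \<times> real) measure" where
  "gauss2 a = density lborel (\<lambda>y. ennreal (normal_density a 1 (fst y) * normal_density a 1 (snd y)))"

definition stdN :: "real measure" where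
  "stdN = density lborel (\<lambda>t. ennreal (std_normal_density t))"

text \<open>Rust--Burrus confidence set with K = I_2 and threshold c (= z_{alpha/2}^2).\<close>
definition rb_set :: "real \<times> real \<Rightarrow> real \<Rightarrow> (real \<times> real) set" where
  "rb_set y c = {x. nonneg2 x \<and> sqdist2 y x \<le> c + (INF x'\<in>{x'. nonneg2 x'}. sqdist2 y x')}"

definition hfun :: "real \<times> real \<Rightarrow> real" where
  "hfun x = fst x - snd x"

definition rb_covers :: "real \<times> real \<Rightarrow> real \<Rightarrow> real \<times> real \<Rightarrow> bool" where
  "rb_covers y c xstar \<longleftrightarrow>
     Inf (hfun ` rb_set y c) \<le> hfun xstar \<and> hfun xstar \<le> Sup (hfun ` rb_set y c)"

end

theory Submission
  imports Defs
begin

text \<open>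
  The least distance from y to the quadrant is attained at the positive part of y, and the one
  to the ray {(t, t) | t \<ge> 0} at the positive part of (y1 + y2)/2 on the diagonal; this gives
  the closed form of lambda(0, y) and the bound lambda(0, y) \<le> (y1 - y2)^2/2 = W^2.
  The mean (a, a) cancels in y1 - y2, so W = (y1 - y2)/sqrt 2 is standard normal for every a, and
  lambda(0, y) is dominated by W^2, a chi-square variable with one degree of freedom.

  The Rust--Burrus set is the quadrant intersected with a ball, hence compact and convex, so its
  image under h is a compact interval. It contains h(a, a) = 0 iff the set meets the diagonal,
  i.e. iff lambda(0, y) \<le> z^2. Non-coverage therefore forces W^2 > z^2, an event of
  probability at most 2 P(N > z) = alpha.
\<close>

lemma INF_eq_attained:
  fixes f :: "'a \<Rightarrow> 'b::conditionally_complete_lattice"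
  assumes "p \<in> A" "\<And>x. x \<in> A \<Longrightarrow> f p \<le> f x"
  shows "(INF x\<in>A. f x) = f p"
  using assms by (intro cInf_eq_minimum) auto

lemma sqdist2_commute: "sqdist2 u v = sqdist2 v u"
  unfolding sqdist2_def by (simp add: power2_commute)

lemma dist_eq_sqrt_sqdist2: "dist u v = sqrt (sqdist2 u v)"
  by (cases u, cases v) (simp add: dist_Pair_Pair dist_real_def sqdist2_def)

lemma sq_dist_max_0_le:
  fixes t u :: real
  assumes "0 \<le> t"
  shows "(max u 0 - u)\<^sup>2 \<le> (t - u)\<^sup>2"
proof (cases "u < 0")
  case True
  with assms have "0 \<le> max u 0 - u" "max u 0 - u \<le> t - u" by auto
  then show ?thesis by (rule power_mono[rotated])
qed simp

lemma sqdist2_diag: "sqdist2 (t, t) y = 2 * (t - (fst y + snd y) / 2)\<^sup>2 + (fst y - snd y)\<^sup>2 / 2"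
  unfolding sqdist2_def by (simp add: power2_eq_square field_simps)

definition quadrant_proj :: "real \<times> real \<Rightarrow> real \<times> real" where
  "quadrant_proj y = (max (fst y) 0, max (snd y) 0)"

definition diag_ray_proj :: "real \<times> real \<Rightarrow> real \<times> real" where
  "diag_ray_proj y = (max ((fst y + snd y) / 2) 0, max ((fst y + snd y) / 2) 0)"

lemma nonneg2_quadrant_proj: "nonneg2 (quadrant_proj y)"
  by (simp add: quadrant_proj_def nonneg2_def)

lemma nonneg2_diag_ray_proj: "nonneg2 (diag_ray_proj y)"
  by (simp add: diag_ray_proj_def nonneg2_def)

lemma sqdist2_quadrant_proj_le: "nonneg2 x \<Longrightarrow> sqdist2 (quadrant_proj y) y \<le> sqdist2 x y"
  unfolding quadrant_proj_def sqdist2_def nonneg2_def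
  using sq_dist_max_0_le[of "fst x" "fst y"] sq_dist_max_0_le[of "snd x" "snd y"] by simp

lemma sqdist2_diag_ray_proj_le:
  assumes "nonneg2 x" "fst x = snd x"
  shows "sqdist2 (diag_ray_proj y) y \<le> sqdist2 x y"
proof -
  obtain t where x: "x = (t, t)" "0 \<le> t"
    using assms by (cases x) (auto simp: nonneg2_def)
  have "(max ((fst y + snd y) / 2) 0 - (fst y + snd y) / 2)\<^sup>2
      \<le> (t - (fst y + snd y) / 2)\<^sup>2"
    using x(2) by (rule sq_dist_max_0_le)
  then show ?thesis
    unfolding x(1) diag_ray_proj_def sqdist2_diag by simp
qed

lemma INF_sqdist2_quadrant: "(INF x\<in>{x. nonneg2 x}. sqdist2 x y) = sqdist2 (quadrant_proj y) y"
  by (rule INF_eq_attained) (simp_all add: nonneg2_quadrant_proj sqdist2_quadrant_proj_le)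

lemma INF_sqdist2_diag_ray:
  "(INF x\<in>{x. nonneg2 x \<and> fst x = snd x}. sqdist2 x y) = sqdist2 (diag_ray_proj y) y"
proof (rule INF_eq_attained)
  show "diag_ray_proj y \<in> {x. nonneg2 x \<and> fst x = snd x}"
    using nonneg2_diag_ray_proj by (simp add: diag_ray_proj_def)
qed (simp add: sqdist2_diag_ray_proj_le)

lemma lam0_eq_proj: "lam0 y = sqdist2 (diag_ray_proj y) y - sqdist2 (quadrant_proj y) y"
  unfolding lam0_def INF_sqdist2_quadrant INF_sqdist2_diag_ray ..

lemma sqdist2_quadrant_proj:
  "sqdist2 (quadrant_proj y) y =
     (if fst y < 0 then (fst y)\<^sup>2 else 0) + (if snd y < 0 then (snd y)\<^sup>2 else 0)"
  by (simp add: quadrant_proj_def sqdist2_def max_def)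

lemma sqdist2_diag_ray_proj:
  "sqdist2 (diag_ray_proj y) y =
     (if fst y + snd y < 0 then (fst y)\<^sup>2 + (snd y)\<^sup>2 else (fst y - snd y)\<^sup>2 / 2)"
  unfolding diag_ray_proj_def sqdist2_diag
  by (cases "fst y + snd y < 0") (simp_all add: power2_eq_square field_simps)

lemma lam0_closed_form: "lam0 y =
            (fst y ^ 2 + snd y ^ 2) * (if fst y + snd y < 0 then 1 else 0)
          + (1/2) * (fst y - snd y) ^ 2 * (if fst y + snd y \<ge> 0 then 1 else 0)
          - fst y ^ 2 * (if fst y < 0 then 1 else 0)
          - snd y ^ 2 * (if snd y < 0 then 1 else 0)"
  unfolding lam0_eq_proj sqdist2_quadrant_proj sqdist2_diag_ray_proj by auto

lemma sq_le_half_sq_diff: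
  fixes u v :: real
  assumes "0 \<le> u" "u + v < 0"
  shows "u\<^sup>2 \<le> (u - v)\<^sup>2 / 2"
proof -
  have "(2 * u)\<^sup>2 \<le> (u - v)\<^sup>2"
    using assms by (intro power_mono) auto
  then have "4 * u\<^sup>2 \<le> (u - v)\<^sup>2"
    by (simp add: power_mult_distrib)
  then show ?thesis
    using zero_le_power2[of u] by linarith
qed

lemma lam0_le_half_sq_diff: "lam0 y \<le> (fst y - snd y)\<^sup>2 / 2"
proof (cases "fst y + snd y < 0")
  case neg: True
  have "(max (fst y) 0)\<^sup>2 + (max (snd y) 0)\<^sup>2 \<le> (fst y - snd y)\<^sup>2 / 2"
  proof (cases "0 \<le> fst y")
    case True
    with neg show ?thesis
      using sq_le_half_sq_diff[of "fst y" "snd y"] by (simp add: max_def)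
  next
    case False
    with neg show ?thesis
      using sq_le_half_sq_diff[of "snd y" "fst y"] by (simp add: max_def power2_commute)
  qed
  with neg show ?thesis
    unfolding lam0_eq_proj sqdist2_quadrant_proj sqdist2_diag_ray_proj by (auto simp: max_def)
next
  case False
  have "0 \<le> sqdist2 (quadrant_proj y) y"
    by (simp add: sqdist2_def)
  with False show ?thesis
    unfolding lam0_eq_proj sqdist2_diag_ray_proj by simp
qed

lemma rb_set_eq: "rb_set y c = {x. nonneg2 x \<and> sqdist2 x y \<le> c + sqdist2 (quadrant_proj y) y}"
proof -
  have "(\<lambda>x. sqdist2 y x) = (\<lambda>x. sqdist2 x y)"
    by (rule ext) (rule sqdist2_commute)
  then show ?thesis
    unfolding rb_set_def INF_sqdist2_quadrant[symmetric] by metis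
qed

lemma quadrant_eq_Times: "{x. nonneg2 x} = {0..} \<times> {0..}"
  by (auto simp: nonneg2_def)

lemma rb_set_eq_quadrant_Int_cball:
  assumes "0 \<le> c"
  shows "rb_set y c = {x. nonneg2 x} \<inter> cball y (sqrt (c + sqdist2 (quadrant_proj y) y))"
proof -
  have "0 \<le> c + sqdist2 (quadrant_proj y) y"
    using assms by (simp add: sqdist2_def)
  then show ?thesis
    unfolding rb_set_eq by (auto simp: dist_eq_sqrt_sqdist2 sqdist2_commute)
qed

lemma compact_connected_mem_iff:
  fixes T :: "real set"
  assumes "compact T" "connected T" "T \<noteq> {}"
  shows "c \<in> T \<longleftrightarrow> Inf T \<le> c \<and> c \<le> Sup T"
proof -
  obtain l u where T: "T = {l..u}"
    using assms(1,2) connected_compact_interval_1 by blast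
  with assms(3) show ?thesis by auto
qed

lemma rb_covers_diag_iff:
  assumes "0 \<le> c"
  shows "rb_covers y c (a, a) \<longleftrightarrow> lam0 y \<le> c"
proof -
  let ?S = "rb_set y c"
  have "compact ?S"
    unfolding rb_set_eq_quadrant_Int_cball[OF assms] quadrant_eq_Times
    by (intro closed_Int_compact closed_Times compact_cball closed_atLeast)
  moreover have "convex ?S"
    unfolding rb_set_eq_quadrant_Int_cball[OF assms] quadrant_eq_Times
    by (intro convex_Int convex_Times convex_cball convex_real_interval)
  moreover have "quadrant_proj y \<in> ?S"
    using assms nonneg2_quadrant_proj by (simp add: rb_set_eq)
  moreover have "continuous_on ?S hfun"
    unfolding hfun_def by (intro continuous_intros)
  ultimately have "compact (hfun ` ?S)" "connected (hfun ` ?S)" "hfun ` ?S \<noteq> {}"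
    by (auto intro: compact_continuous_image connected_continuous_image convex_connected)
  then have "rb_covers y c (a, a) \<longleftrightarrow> 0 \<in> hfun ` ?S"
    unfolding rb_covers_def by (simp add: compact_connected_mem_iff hfun_def)
  also have "\<dots> \<longleftrightarrow> diag_ray_proj y \<in> ?S"
  proof
    assume "0 \<in> hfun ` ?S"
    then obtain x where "x \<in> ?S" "fst x = snd x"
      by (auto simp: hfun_def)
    then show "diag_ray_proj y \<in> ?S"
      using sqdist2_diag_ray_proj_le[of x y] nonneg2_diag_ray_proj by (auto simp: rb_set_eq)
  next
    assume "diag_ray_proj y \<in> ?S"
    moreover have "hfun (diag_ray_proj y) = 0"
      by (simp add: hfun_def diag_ray_proj_def)
    ultimately show "0 \<in> hfun ` ?S"
      by (metis image_eqI)
  qed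
  also have "\<dots> \<longleftrightarrow> lam0 y \<le> c"
    by (auto simp: rb_set_eq lam0_eq_proj nonneg2_diag_ray_proj)
  finally show ?thesis .
qed

definition gauss1 :: "real \<Rightarrow> real measure" where
  "gauss1 a = density lborel (\<lambda>t. ennreal (normal_density a 1 t))"

lemma prob_space_gauss1: "prob_space (gauss1 a)"
  unfolding gauss1_def by (rule prob_space_normal_density) simp

lemma sets_gauss1 [measurable_cong]: "sets (gauss1 a) = sets borel"
  by (simp add: gauss1_def)

lemma stdN_eq_gauss1: "stdN = gauss1 0"
  by (simp add: stdN_def gauss1_def)

lemma gauss2_eq_pair_measure: "gauss2 a = gauss1 a \<Otimes>\<^sub>M gauss1 a"
proof -
  interpret prob_space "gauss1 a" by (rule prob_space_gauss1)
  have "gauss1 a \<Otimes>\<^sub>M gauss1 a =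
      density (lborel \<Otimes>\<^sub>M lborel)
        (\<lambda>(s, t). ennreal (normal_density a 1 s) * ennreal (normal_density a 1 t))"
    unfolding gauss1_def
    by (rule pair_measure_density)
       (auto simp: lborel.sigma_finite_measure_axioms
         sigma_finite_measure_axioms[unfolded gauss1_def])
  also have "\<dots> = gauss2 a"
    unfolding gauss2_def lborel_prod
    by (rule arg_cong[where f="density lborel"]) (auto simp: ennreal_mult)
  finally show ?thesis ..
qed

lemma prob_space_gauss2: "prob_space (gauss2 a)"
proof -
  interpret prob_space "gauss1 a" by (rule prob_space_gauss1)
  interpret pair_prob_space "gauss1 a" "gauss1 a" ..
  show ?thesis unfolding gauss2_eq_pair_measure by (rule prob_space_axioms)
qed

lemma sets_gauss2 [measurable_cong]: "sets (gauss2 a) = sets borel"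
  by (simp add: gauss2_def)

lemma (in pair_prob_space) distr_pair_snd: "distr (M1 \<Otimes>\<^sub>M M2) M2 snd = M2"
proof (intro measure_eqI)
  fix A assume A: "A \<in> sets (distr (M1 \<Otimes>\<^sub>M M2) M2 snd)"
  then have "emeasure (distr (M1 \<Otimes>\<^sub>M M2) M2 snd) A = emeasure (M1 \<Otimes>\<^sub>M M2) (space M1 \<times> A)"
    by (auto simp: emeasure_distr space_pair_measure dest: sets.sets_into_space
             intro!: arg_cong2[where f=emeasure])
  with A show "emeasure (distr (M1 \<Otimes>\<^sub>M M2) M2 snd) A = emeasure M2 A"
    by (simp add: M2.emeasure_pair_measure_Times M1.emeasure_space_1)
qed simp

lemma distr_gauss2_fst: "distr (gauss2 a) borel fst = gauss1 a"
proof -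
  interpret prob_space "gauss1 a" by (rule prob_space_gauss1)
  have "distr (gauss2 a) borel fst = distr (gauss1 a \<Otimes>\<^sub>M gauss1 a) (gauss1 a) fst"
    unfolding gauss2_eq_pair_measure by (rule distr_cong[OF refl sets_gauss1[symmetric]]) simp
  then show ?thesis by (simp add: distr_pair_fst)
qed

lemma distr_gauss2_snd: "distr (gauss2 a) borel snd = gauss1 a"
proof -
  interpret prob_space "gauss1 a" by (rule prob_space_gauss1)
  interpret pair_prob_space "gauss1 a" "gauss1 a" ..
  have "distr (gauss2 a) borel snd = distr (gauss1 a \<Otimes>\<^sub>M gauss1 a) (gauss1 a) snd"
    unfolding gauss2_eq_pair_measure by (rule distr_cong[OF refl sets_gauss1[symmetric]]) simp
  then show ?thesis by (simp add: distr_pair_snd)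
qed

lemma borel_measurable_fst_snd [measurable]:
  "fst \<in> borel_measurable (borel :: (real \<times> real) measure)"
  "snd \<in> borel_measurable (borel :: (real \<times> real) measure)"
  using measurable_fst[of "borel :: real measure" "borel :: real measure"]
    measurable_snd[of "borel :: real measure" "borel :: real measure"]
  by (simp_all add: borel_prod)

lemma indep_var_gauss2_fst_snd: "prob_space.indep_var (gauss2 a) borel fst borel snd"
proof -
  interpret prob_space "gauss2 a" by (rule prob_space_gauss2)
  have "distr (gauss2 a) (borel \<Otimes>\<^sub>M borel) (\<lambda>y. (fst y, snd y)) = gauss2 a"
    by (simp add: distr_id2 borel_prod sets_gauss2)
  then show ?thesis
    unfolding indep_var_distribution_eq
    by (simp add: measurable_cong_sets[OF sets_gauss2 refl] distr_gauss2_fst distr_gauss2_snd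
        gauss2_eq_pair_measure[symmetric])
qed

lemma distributed_gauss2_fst: "distributed (gauss2 a) lborel fst (normal_density a 1)"
  and distributed_gauss2_snd: "distributed (gauss2 a) lborel snd (normal_density a 1)"
  using distr_gauss2_fst[of a] distr_gauss2_snd[of a]
  by (simp_all add: distributed_def gauss1_def distr_cong[OF refl sets_lborel]
      measurable_cong_sets[OF sets_gauss2 refl])

lemma distributed_gauss2_normalized_diff:
  "distributed (gauss2 a) lborel (\<lambda>y. (fst y - snd y) / sqrt 2) std_normal_density"
proof -
  interpret prob_space "gauss2 a" by (rule prob_space_gauss2)
  have "distributed (gauss2 a) lborel (\<lambda>y. fst y - snd y)
      (normal_density (a - a) (sqrt (1\<^sup>2 + 1\<^sup>2)))"
    by (rule diff_indep_normal[OF indep_var_gauss2_fst_snd _ _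
          distributed_gauss2_fst distributed_gauss2_snd]) simp_all
  then show ?thesis
    using normal_standard_normal_convert[of "sqrt 2" "\<lambda>y. fst y - snd y" 0] by simp
qed

lemma lam0_tail_le_stdN_sq_tail: "measure (gauss2 a) {y. lam0 y > z} \<le> measure stdN {t. t\<^sup>2 > z}"
proof -
  interpret prob_space "gauss2 a" by (rule prob_space_gauss2)
  let ?W = "\<lambda>y::real \<times> real. (fst y - snd y) / sqrt 2"
  have W: "distr (gauss2 a) lborel ?W = stdN" "?W \<in> measurable (gauss2 a) lborel"
    using distributed_gauss2_normalized_diff by (auto simp: distributed_def stdN_def)
  have "{y. lam0 y > z} \<subseteq> ?W -` {t. t\<^sup>2 > z} \<inter> space (gauss2 a)"
  proof
    fix y assume "y \<in> {y. lam0 y > z}"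
    with lam0_le_half_sq_diff[of y] show "y \<in> ?W -` {t. t\<^sup>2 > z} \<inter> space (gauss2 a)"
      by (simp add: power_divide gauss2_def)
  qed
  then have "measure (gauss2 a) {y. lam0 y > z}
      \<le> measure (gauss2 a) (?W -` {t. t\<^sup>2 > z} \<inter> space (gauss2 a))"
    using W(2) by (intro finite_measure_mono) (auto intro: measurable_sets)
  also have "\<dots> = measure (distr (gauss2 a) lborel ?W) {t. t\<^sup>2 > z}"
    using W(2) by (rule measure_distr[symmetric]) simp
  also have "\<dots> = measure stdN {t. t\<^sup>2 > z}"
    using W(1) by simp
  finally show ?thesis .
qed

lemma distr_stdN_uminus: "distr stdN lborel uminus = stdN"
proof -
  interpret prob_space stdN by (simp add: stdN_eq_gauss1 prob_space_gauss1)
  have "distributed stdN lborel (\<lambda>t. t) std_normal_density"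
    by (simp add: distributed_def stdN_def distr_id2)
  from normal_density_affine[OF this, of "-1" 0] show ?thesis
    by (simp add: distributed_def stdN_def)
qed

lemma stdN_lower_tail: "measure stdN {t. t < - z} = measure stdN {t. z < t}"
proof -
  have "measure stdN {t. z < t} = measure (distr stdN lborel uminus) {t. z < t}"
    by (simp add: distr_stdN_uminus)
  also have "\<dots> = measure stdN {t. t < - z}"
    by (subst measure_distr) (auto simp: stdN_def intro!: arg_cong[where f="measure _"])
  finally show ?thesis ..
qed

lemma stdN_sq_tail_le: "measure stdN {t. t\<^sup>2 > z\<^sup>2} \<le> 2 * measure stdN {t. t > z}"
proof -
  interpret prob_space stdN by (simp add: stdN_eq_gauss1 prob_space_gauss1)
  have "{t. t\<^sup>2 > z\<^sup>2} \<subseteq> {t. t > z} \<union> {t. t < - z}"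
    using abs_le_square_iff by (force simp: not_le[symmetric])
  then have "measure stdN {t. t\<^sup>2 > z\<^sup>2} \<le> measure stdN ({t. t > z} \<union> {t. t < - z})"
    by (intro finite_measure_mono) (auto simp: stdN_def)
  also have "\<dots> \<le> measure stdN {t. t > z} + measure stdN {t. t < - z}"
    by (intro measure_Un_le) (auto simp: stdN_def)
  finally show ?thesis
    by (simp add: stdN_lower_tail)
qed

lemma borel_measurable_lam0: "lam0 \<in> borel_measurable borel"
  unfolding lam0_eq_proj[abs_def] sqdist2_quadrant_proj sqdist2_diag_ray_proj by measurable

lemma rb_coverage_ge:
  assumes "measure stdN {t. t > z} = \<alpha> / 2"
  shows "1 - \<alpha> \<le> measure (gauss2 a) {y. rb_covers y (z\<^sup>2) (a, a)}"
proof -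
  interpret prob_space "gauss2 a" by (rule prob_space_gauss2)
  have "{y. rb_covers y (z\<^sup>2) (a, a)} = space (gauss2 a) - {y. z\<^sup>2 < lam0 y}"
    using rb_covers_diag_iff[of "z\<^sup>2"] by (auto simp: gauss2_def)
  moreover have "{y. z\<^sup>2 < lam0 y} \<in> events"
    using borel_measurable_lam0 by (simp add: sets_gauss2)
  moreover have "measure (gauss2 a) {y. z\<^sup>2 < lam0 y} \<le> \<alpha>"
    using lam0_tail_le_stdN_sq_tail[of a "z\<^sup>2"] stdN_sq_tail_le[of z] assms by simp
  ultimately show ?thesis
    by (simp add: prob_compl)
qed

theorem lemma4p4:
  fixes a :: real
  assumes "a \<ge> 0"
  shows "(\<forall>y. lam0 y =
            (fst y ^ 2 + snd y ^ 2) * (if fst y + snd y < 0 then 1 else 0)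
          + (1/2) * (fst y - snd y) ^ 2 * (if fst y + snd y \<ge> 0 then 1 else 0)
          - fst y ^ 2 * (if fst y < 0 then 1 else 0)
          - snd y ^ 2 * (if snd y < 0 then 1 else 0))
     \<and> (\<forall>z::real. measure (gauss2 a) {y. lam0 y > z} \<le> measure stdN {t. t ^ 2 > z})
     \<and> (\<forall>\<alpha>::real. \<forall>z::real. 0 < \<alpha> \<and> \<alpha> < 1 \<and> measure stdN {t. t > z} = \<alpha> / 2 \<longrightarrow>
          measure (gauss2 a) {y. rb_covers y (z ^ 2) (a, a)} \<ge> 1 - \<alpha>)"
  using lam0_closed_form lam0_tail_le_stdN_sq_tail rb_coverage_ge by blast

end
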